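(* Let $1\le s\le n$, $0<\gamma<1$, and let $\mathbf{D}=[\mathbf{d}_1,\dots,\mathbf{d}_n]\in\mathbb{R}^{d\times n}$ be any matrix with $\max\{\|\mathbf{d}_i\|_2^2:i\in[n]\}\le\rho$. Then \[ w(\mathbf{D}S_\gamma)\ \le\ 6\gamma^{-1}\sqrt{s\rho\log(\sqrt2\,n/s)}. \]
   Context: $S_\gamma:=\{\mathbf{x}\in\mathbb{R}^n:\|\mathbf{x}\|_2=1,\ \|\mathbf{x}_T\|_1\ge\gamma\|\mathbf{x}_{T^c}\|_1\text{ for some }T\subset[n],|T|\le s\}$, where $\mathbf{x}_T$ agrees with $\mathbf{x}$ on $T$ and is $0$ elsewhere. $\mathbf{D}S_\gamma=\{\mathbf{D}\mathbf{x}:\mathbf{x}\in S_\gamma\}$, and $w(T)=\mathbb{E}\sup_{\mathbf{x}\in T}\langle\mathbf{g},\mathbf{x}\rangle$ with $\mathbf{g}\sim N(\mathbf{0},\mathbf{I}_d)$ is the Gaussian width. *)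

theory Defs
  imports "HOL-Probability.Probability"
begin

definition std_gaussian :: "(real^'d) measure" where
  "std_gaussian = density lborel
     (\<lambda>g. ennreal ((2 * pi) powr (- real CARD('d) / 2) * exp (- (norm g)\<^sup>2 / 2)))"

definition gaussian_width :: "(real^'d) set \<Rightarrow> real" where
  "gaussian_width T = (\<integral>g. (SUP x\<in>T. g \<bullet> x) \<partial>std_gaussian)"

definition S_gamma :: "nat \<Rightarrow> real \<Rightarrow> (real^'n) set" where
  "S_gamma s \<gamma> = {x. norm x = 1 \<and>
     (\<exists>T::'n set. card T \<le> s \<and>
        (\<Sum>i\<in>T. \<bar>x $ i\<bar>) \<ge> \<gamma> * (\<Sum>i\<in>-T. \<bar>x $ i\<bar>))}"

end

theory Submission
  imports Defs
begin

text \<open>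
  For x in S_gamma s \<gamma> the cone condition gives |x|_1 \<le> (1 + 1/\<gamma>) sqrt s. Splitting each
  coefficient h_i = <g, d_i> at a threshold \<tau> yields, uniformly in x,
  <g, D x> \<le> \<tau> |x|_1 + sqrt (\<Sum>_i max 0 (|h_i| - \<tau>)^2).
  The expected square root is at most the square root of the expectation, and the elementary
  bound max 0 (|u| - \<tau>)^2 \<le> 2 l^-2 exp (-l \<tau>) (exp (l u) + exp (-l u)) together with the
  Gaussian moment generating function bounds that expectation by 4 n l^-2 exp (-l \<tau> + l^2 \<rho> / 2).
  With L = ln (sqrt 2 n / s), the choice \<tau> = 2 sqrt (\<rho> L), l = 2 sqrt (L / \<rho>) gives the claim
  when L \<ge> 1/2; otherwise n < 3 s / 2, and \<tau> = 0, l = sqrt (2 / \<rho>) suffice.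
\<close>

lemma nn_integral_std_normal_density_exp:
  "(\<integral>\<^sup>+x. ennreal (std_normal_density x * exp (c * x)) \<partial>lborel) = ennreal (exp (c\<^sup>2 / 2))"
proof -
  have "std_normal_density x * exp (c * x) = exp (c\<^sup>2 / 2) * normal_density c 1 x" for x
  proof -
    have "- x\<^sup>2 / 2 + c * x = c\<^sup>2 / 2 + (- (x - c)\<^sup>2 / (2 * 1\<^sup>2))"
      by (simp add: power2_eq_square field_simps)
    then show ?thesis
      by (simp add: std_normal_density_def normal_density_def exp_add[symmetric] mult_exp_exp)
  qed
  then have "(\<integral>\<^sup>+x. ennreal (std_normal_density x * exp (c * x)) \<partial>lborel)
      = ennreal (exp (c\<^sup>2 / 2)) * (\<integral>\<^sup>+x. ennreal (normal_density c 1 x) \<partial>lborel)"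
    by (simp add: ennreal_mult nn_integral_cmult)
  also have "(\<integral>\<^sup>+x. ennreal (normal_density c 1 x) \<partial>lborel) = 1"
    by (subst nn_integral_eq_integral) auto
  finally show ?thesis by simp
qed

definition std_gaussian_density :: "real^'d \<Rightarrow> real" where
  "std_gaussian_density g = (2 * pi) powr (- real CARD('d) / 2) * exp (- (norm g)\<^sup>2 / 2)"

lemma std_gaussian_eq_density: "std_gaussian = density lborel (\<lambda>g. ennreal (std_gaussian_density g))"
  unfolding std_gaussian_def std_gaussian_density_def ..

lemma sets_std_gaussian [measurable_cong, simp]: "sets std_gaussian = sets borel"
  by (simp add: std_gaussian_eq_density)

lemma space_std_gaussian [simp]: "space std_gaussian = UNIV"
  by (simp add: std_gaussian_eq_density)

lemma std_gaussian_density_nonneg: "0 \<le> std_gaussian_density g"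
  unfolding std_gaussian_density_def by simp

lemma borel_measurable_std_gaussian_density [measurable]: "std_gaussian_density \<in> borel_measurable borel"
  unfolding std_gaussian_density_def by measurable

lemma power2_norm_eq_sum_Basis: "(norm (x :: 'a :: euclidean_space))\<^sup>2 = (\<Sum>b\<in>Basis. (x \<bullet> b)\<^sup>2)"
  unfolding power2_norm_eq_inner by (subst euclidean_inner) (simp add: power2_eq_square)

lemma std_gaussian_density_mult_exp_eq_prod:
  fixes g v :: "real^'d"
  shows "std_gaussian_density g * exp (g \<bullet> v)
       = (\<Prod>b\<in>Basis. std_normal_density (g \<bullet> b) * exp ((v \<bullet> b) * (g \<bullet> b)))"
proof -
  have const: "(2 * pi) powr (- real CARD('d) / 2) = (\<Prod>b\<in>(Basis :: (real^'d) set). 1 / sqrt (2 * pi))"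
  proof -
    have "(2 * pi) powr (- real CARD('d) / 2) = ((2 * pi) powr (-1/2)) ^ CARD('d)"
      by (simp add: powr_powr powr_realpow[symmetric])
    then show ?thesis by (simp add: powr_minus_divide powr_half_sqrt)
  qed
  have gauss: "exp (- (norm g)\<^sup>2 / 2) = (\<Prod>b\<in>(Basis :: (real^'d) set). exp (- (g \<bullet> b)\<^sup>2 / 2))"
  proof -
    have "- (norm g)\<^sup>2 / 2 = (\<Sum>b\<in>(Basis :: (real^'d) set). - (g \<bullet> b)\<^sup>2 / 2)"
      by (simp add: power2_norm_eq_sum_Basis[of g] sum_divide_distrib[symmetric] sum_negf)
    then show ?thesis by (simp add: exp_sum)
  qed
  have tilt: "exp (g \<bullet> v) = (\<Prod>b\<in>(Basis :: (real^'d) set). exp ((v \<bullet> b) * (g \<bullet> b)))"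
    by (simp add: euclidean_inner[of g v] exp_sum mult.commute)
  show ?thesis
    unfolding std_gaussian_density_def const gauss tilt std_normal_density_def prod.distrib[symmetric]
    by (simp add: mult.assoc)
qed

lemma nn_integral_std_gaussian_density_exp:
  fixes v :: "real^'d"
  shows "(\<integral>\<^sup>+g. ennreal (std_gaussian_density g * exp (g \<bullet> v)) \<partial>lborel) = ennreal (exp ((norm v)\<^sup>2 / 2))"
proof -
  have "(\<integral>\<^sup>+g. ennreal (std_gaussian_density g * exp (g \<bullet> v)) \<partial>lborel)
     = (\<integral>\<^sup>+g. (\<Prod>b\<in>Basis. ennreal (std_normal_density (g \<bullet> b) * exp ((v \<bullet> b) * (g \<bullet> b)))) \<partial>lborel)"
    by (simp add: std_gaussian_density_mult_exp_eq_prod prod_ennreal)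
  also have "\<dots> = (\<Prod>b\<in>Basis. (\<integral>\<^sup>+x. ennreal (std_normal_density x * exp ((v \<bullet> b) * x)) \<partial>lborel))"
    by (rule nn_integral_lborel_prod) auto
  also have "\<dots> = ennreal (exp ((norm v)\<^sup>2 / 2))"
    by (simp add: nn_integral_std_normal_density_exp prod_ennreal exp_sum[symmetric]
        power2_norm_eq_sum_Basis[of v] sum_divide_distrib)
  finally show ?thesis .
qed

lemma nn_integral_std_gaussian:
  "f \<in> borel_measurable borel \<Longrightarrow>
   (\<integral>\<^sup>+g. f g \<partial>std_gaussian) = (\<integral>\<^sup>+g. ennreal (std_gaussian_density g) * f g \<partial>lborel)"
  unfolding std_gaussian_eq_density by (subst nn_integral_density) auto

lemma prob_space_std_gaussian: "prob_space (std_gaussian :: (real^'d) measure)"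
proof (rule prob_spaceI)
  have "emeasure (std_gaussian :: (real^'d) measure) (space std_gaussian)
      = (\<integral>\<^sup>+(g::real^'d). ennreal (std_gaussian_density g * exp (g \<bullet> 0)) \<partial>lborel)"
    by (simp add: std_gaussian_eq_density emeasure_density)
  also have "\<dots> = 1"
    by (subst nn_integral_std_gaussian_density_exp) simp
  finally show "emeasure (std_gaussian :: (real^'d) measure) (space std_gaussian) = 1" .
qed

lemma has_bochner_integral_std_gaussian_exp_inner:
  fixes v :: "real^'d"
  shows "has_bochner_integral std_gaussian (\<lambda>g. exp (g \<bullet> v)) (exp ((norm v)\<^sup>2 / 2))"
proof (rule has_bochner_integral_nn_integral)
  show "(\<integral>\<^sup>+g. ennreal (exp (g \<bullet> v)) \<partial>std_gaussian) = ennreal (exp ((norm v)\<^sup>2 / 2))"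
    by (subst nn_integral_std_gaussian)
      (auto simp: ennreal_mult'[symmetric] std_gaussian_density_nonneg nn_integral_std_gaussian_density_exp)
qed auto

lemma gaussian_width_le_integral:
  fixes S :: "(real^'d) set" and B :: "real^'d \<Rightarrow> real"
  assumes "S \<noteq> {}" and "\<And>g y. y \<in> S \<Longrightarrow> g \<bullet> y \<le> B g"
    and "integrable std_gaussian B" and "\<And>g. 0 \<le> B g"
  shows "gaussian_width S \<le> integral\<^sup>L std_gaussian B"
  unfolding gaussian_width_def
  using assms by (intro integral_mono' cSUP_least) auto

lemma power2_norm_vec_eq_sum: "(norm (x :: real^'n))\<^sup>2 = (\<Sum>i\<in>UNIV. (x $ i)\<^sup>2)"
  by (simp add: norm_vec_def L2_set_def sum_nonneg)

lemma S_gamma_nonempty: "1 \<le> s \<Longrightarrow> S_gamma s \<gamma> \<noteq> ({} :: (real^'n) set)"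
proof -
  assume "1 \<le> s"
  fix k :: 'n
  have "(\<Sum>i\<in>-{k}. \<bar>axis k (1::real) $ i\<bar>) = 0"
    by (intro sum.neutral) (auto simp: axis_def)
  moreover have "norm (axis k (1::real)) = 1"
    by simp
  ultimately have "axis k (1::real) \<in> S_gamma s \<gamma>"
    using \<open>1 \<le> s\<close> unfolding S_gamma_def by (intro CollectI conjI exI[of _ "{k}"]) (simp_all add: axis_def)
  then show ?thesis by auto
qed

lemma S_gamma_sum_abs_le:
  fixes x :: "real^'n"
  assumes "x \<in> S_gamma s \<gamma>" and "0 < \<gamma>"
  shows "(\<Sum>i\<in>UNIV. \<bar>x $ i\<bar>) \<le> (1 + 1/\<gamma>) * sqrt (real s)"
proof -
  obtain T :: "'n set" where "norm x = 1" and "card T \<le> s"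
    and cone: "\<gamma> * (\<Sum>i\<in>-T. \<bar>x $ i\<bar>) \<le> (\<Sum>i\<in>T. \<bar>x $ i\<bar>)"
    using assms(1) unfolding S_gamma_def by auto
  have "(\<Sum>i\<in>T. \<bar>x $ i\<bar>)\<^sup>2 \<le> (\<Sum>i\<in>T. \<bar>x $ i\<bar>\<^sup>2) * card T"
    by (rule sum_squared_le_sum_of_squares)
  also have "\<dots> \<le> 1 * real s"
  proof (rule mult_mono)
    have "(\<Sum>i\<in>T. \<bar>x $ i\<bar>\<^sup>2) \<le> (\<Sum>i\<in>UNIV. (x $ i)\<^sup>2)"
      by (auto intro: sum_mono2)
    then show "(\<Sum>i\<in>T. \<bar>x $ i\<bar>\<^sup>2) \<le> 1"
      using \<open>norm x = 1\<close> power2_norm_vec_eq_sum[of x] by simp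
  qed (use \<open>card T \<le> s\<close> in auto)
  finally have head: "(\<Sum>i\<in>T. \<bar>x $ i\<bar>) \<le> sqrt (real s)"
    by (simp add: real_le_rsqrt)
  have "(\<Sum>i\<in>UNIV. \<bar>x $ i\<bar>) = (\<Sum>i\<in>T. \<bar>x $ i\<bar>) + (\<Sum>i\<in>-T. \<bar>x $ i\<bar>)"
    by (subst sum.union_disjoint[symmetric]) auto
  also have "\<dots> \<le> (1 + 1/\<gamma>) * (\<Sum>i\<in>T. \<bar>x $ i\<bar>)"
    using cone assms(2) by (simp add: field_simps)
  also have "\<dots> \<le> (1 + 1/\<gamma>) * sqrt (real s)"
    using head assms(2) by (intro mult_left_mono) auto
  finally show ?thesis .
qed

lemma sum_mult_le_threshold:
  fixes x :: "real^'n" and h :: "'n \<Rightarrow> real"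
  assumes "0 \<le> \<tau>"
  shows "(\<Sum>i\<in>UNIV. x $ i * h i)
       \<le> \<tau> * (\<Sum>i\<in>UNIV. \<bar>x $ i\<bar>) + norm x * sqrt (\<Sum>i\<in>UNIV. (max 0 (\<bar>h i\<bar> - \<tau>))\<^sup>2)"
proof -
  have "x $ i * h i \<le> \<tau> * \<bar>x $ i\<bar> + \<bar>x $ i\<bar> * max 0 (\<bar>h i\<bar> - \<tau>)" for i
  proof -
    have "x $ i * h i \<le> \<bar>x $ i\<bar> * \<bar>h i\<bar>"
      by (simp add: abs_mult[symmetric])
    also have "\<dots> \<le> \<bar>x $ i\<bar> * (\<tau> + max 0 (\<bar>h i\<bar> - \<tau>))"
      by (intro mult_left_mono) auto
    finally show ?thesis by (simp add: algebra_simps)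
  qed
  then have "(\<Sum>i\<in>UNIV. x $ i * h i)
      \<le> \<tau> * (\<Sum>i\<in>UNIV. \<bar>x $ i\<bar>) + (\<Sum>i\<in>UNIV. \<bar>x $ i\<bar> * max 0 (\<bar>h i\<bar> - \<tau>))"
    by (simp add: sum_mono sum.distrib[symmetric] sum_distrib_left)
  moreover have "(\<Sum>i\<in>UNIV. \<bar>x $ i\<bar> * max 0 (\<bar>h i\<bar> - \<tau>))
      \<le> norm x * sqrt (\<Sum>i\<in>UNIV. (max 0 (\<bar>h i\<bar> - \<tau>))\<^sup>2)"
  proof -
    have "(\<Sum>i\<in>UNIV. \<bar>x $ i\<bar> * max 0 (\<bar>h i\<bar> - \<tau>))\<^sup>2
        \<le> (\<Sum>i\<in>UNIV. \<bar>x $ i\<bar>\<^sup>2) * (\<Sum>i\<in>UNIV. (max 0 (\<bar>h i\<bar> - \<tau>))\<^sup>2)"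
      by (rule Cauchy_Schwarz_ineq_sum)
    also have "\<dots> = (norm x * sqrt (\<Sum>i\<in>UNIV. (max 0 (\<bar>h i\<bar> - \<tau>))\<^sup>2))\<^sup>2"
      by (simp add: power_mult_distrib power2_norm_vec_eq_sum sum_nonneg)
    finally show ?thesis
      by (rule power2_le_imp_le) (simp add: sum_nonneg)
  qed
  ultimately show ?thesis by linarith
qed

lemma power2_max_abs_sub_le_exp:
  fixes l \<tau> u :: real
  assumes "0 < l" and "0 \<le> \<tau>"
  shows "(max 0 (\<bar>u\<bar> - \<tau>))\<^sup>2 \<le> 2 / l\<^sup>2 * exp (- l * \<tau>) * (exp (l * u) + exp (- l * u))"
proof (cases "\<bar>u\<bar> \<le> \<tau>")
  case True
  then show ?thesis using assms by (simp add: max_def add_pos_pos)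
next
  case False
  define w where "w = \<bar>u\<bar> - \<tau>"
  have "0 < w" using False w_def by simp
  have "(l * w)\<^sup>2 / 2 \<le> exp (l * w)"
    using exp_lower_Taylor_quadratic[of "l * w"] \<open>0 < w\<close> assms(1) mult_pos_pos[of l w] by linarith
  then have "w\<^sup>2 \<le> 2 / l\<^sup>2 * exp (l * w)"
    using assms(1) by (simp add: field_simps power_mult_distrib)
  also have "exp (l * w) = exp (- l * \<tau>) * exp (l * \<bar>u\<bar>)"
    by (simp add: w_def mult_exp_exp algebra_simps)
  also have "2 / l\<^sup>2 * (exp (- l * \<tau>) * exp (l * \<bar>u\<bar>))
      \<le> 2 / l\<^sup>2 * (exp (- l * \<tau>) * (exp (l * u) + exp (- l * u)))"
    by (intro mult_left_mono) (cases "0 \<le> u", auto simp: add_pos_pos)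
  finally show ?thesis
    using \<open>0 < w\<close> by (simp add: w_def mult.assoc)
qed

lemma inner_matrix_vector_mult:
  fixes D :: "real^'n^'d" and g :: "real^'d"
  shows "g \<bullet> (D *v x) = (\<Sum>i\<in>UNIV. x $ i * (g \<bullet> column i D))"
  by (simp add: matrix_mult_sum inner_sum_right scalar_mult_eq_scaleR)

lemma
  fixes D :: "real^'n^'d" and l \<tau> \<rho> :: real
  assumes "0 < l" and "0 \<le> \<tau>" and col: "\<forall>i. (norm (column i D))\<^sup>2 \<le> \<rho>"
  defines "Y \<equiv> \<lambda>g. \<Sum>i\<in>UNIV. (max 0 (\<bar>g \<bullet> column i D\<bar> - \<tau>))\<^sup>2"
  shows integrable_std_gaussian_threshold_tail: "integrable std_gaussian Y"
    and integral_std_gaussian_threshold_tail_le: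
      "integral\<^sup>L std_gaussian Y \<le> real CARD('n) * (4 / l\<^sup>2) * exp (- l * \<tau> + l\<^sup>2 * \<rho> / 2)"
proof -
  define c where "c = 2 / l\<^sup>2 * exp (- l * \<tau>)"
  define Z where "Z g = c * (\<Sum>i\<in>UNIV. exp (g \<bullet> (l *\<^sub>R column i D)) + exp (g \<bullet> (- l *\<^sub>R column i D)))"
    for g :: "real^'d"
  define z where "z = c * (\<Sum>i\<in>(UNIV::'n set).
      exp ((norm (l *\<^sub>R column i D))\<^sup>2 / 2) + exp ((norm (- l *\<^sub>R column i D))\<^sup>2 / 2))"
  have Z: "has_bochner_integral std_gaussian Z z"
    unfolding Z_def z_def
    by (intro has_bochner_integral_mult_right has_bochner_integral_sum has_bochner_integral_add
        has_bochner_integral_std_gaussian_exp_inner)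
  have Y_le_Z: "Y g \<le> Z g" for g
  proof -
    have "Y g \<le> (\<Sum>i\<in>UNIV. c * (exp (l * (g \<bullet> column i D)) + exp (- l * (g \<bullet> column i D))))"
      unfolding Y_def c_def by (intro sum_mono power2_max_abs_sub_le_exp assms(1,2))
    then show ?thesis
      by (simp add: Z_def sum_distrib_left)
  qed
  have bound: "exp ((norm (a *\<^sub>R column i D))\<^sup>2 / 2) \<le> exp (l\<^sup>2 * \<rho> / 2)" if "\<bar>a\<bar> = l" for a i
  proof -
    have "(norm (a *\<^sub>R column i D))\<^sup>2 = l\<^sup>2 * (norm (column i D))\<^sup>2"
      using that by (simp add: power_mult_distrib)
    also have "\<dots> \<le> l\<^sup>2 * \<rho>"
      using col by (intro mult_left_mono) auto
    finally show ?thesis by simp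
  qed
  have "\<bar>l\<bar> = l" "\<bar>- l\<bar> = l"
    using assms(1) by auto
  then have "z \<le> c * (\<Sum>i\<in>(UNIV::'n set). 2 * exp (l\<^sup>2 * \<rho> / 2))"
    unfolding z_def c_def using bound by (intro mult_left_mono sum_mono) (auto simp del: abs_minus_cancel)
  also have "\<dots> = real CARD('n) * (4 / l\<^sup>2) * exp (- l * \<tau> + l\<^sup>2 * \<rho> / 2)"
    by (simp add: c_def exp_add[symmetric] algebra_simps)
  finally have z_le: "z \<le> real CARD('n) * (4 / l\<^sup>2) * exp (- l * \<tau> + l\<^sup>2 * \<rho> / 2)" .
  have "Y \<in> borel_measurable std_gaussian"
    unfolding Y_def by measurable
  moreover have "0 \<le> Y g" for g
    unfolding Y_def by (intro sum_nonneg) auto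
  ultimately show Y: "integrable std_gaussian Y"
    using Y_le_Z by (intro Bochner_Integration.integrable_bound[OF integrable.intros[OF Z]])
      (auto intro: order_trans[OF _ abs_ge_self])
  have "integral\<^sup>L std_gaussian Y \<le> integral\<^sup>L std_gaussian Z"
    using Y Z Y_le_Z by (intro integral_mono) (auto intro: integrable.intros)
  then show "integral\<^sup>L std_gaussian Y \<le> real CARD('n) * (4 / l\<^sup>2) * exp (- l * \<tau> + l\<^sup>2 * \<rho> / 2)"
    using Z z_le by (simp add: has_bochner_integral_integral_eq)
qed

lemma gaussian_width_cone_image_le:
  fixes D :: "real^'n^'d" and s :: nat and \<gamma> \<rho> \<tau> l :: real
  assumes "0 < \<gamma>" and "1 \<le> s" and "0 \<le> \<tau>" and "0 < l"
    and col: "\<forall>i. (norm (column i D))\<^sup>2 \<le> \<rho>"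
  shows "gaussian_width ((\<lambda>x. D *v x) ` S_gamma s \<gamma>)
     \<le> \<tau> * ((1 + 1/\<gamma>) * sqrt (real s))
        + sqrt (real CARD('n) * (4 / l\<^sup>2) * exp (- l * \<tau> + l\<^sup>2 * \<rho> / 2))"
proof -
  define R where "R = (1 + 1/\<gamma>) * sqrt (real s)"
  define E where "E = real CARD('n) * (4 / l\<^sup>2) * exp (- l * \<tau> + l\<^sup>2 * \<rho> / 2)"
  define Y where "Y g = (\<Sum>i\<in>UNIV. (max 0 (\<bar>g \<bullet> column i D\<bar> - \<tau>))\<^sup>2)" for g :: "real^'d"
  have "0 < E"
    unfolding E_def using \<open>0 < l\<close> by simp
  then have "0 < sqrt E"
    by simp
  have Y_nonneg: "0 \<le> Y g" for g
    unfolding Y_def by (intro sum_nonneg) auto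
  interpret prob_space "std_gaussian :: (real^'d) measure"
    by (rule prob_space_std_gaussian)
  \<comment> \<open>Jensen for the square root, via \<open>\<surd>y \<le> (y/a + a)/2\<close> with \<open>a = \<surd>E\<close>.\<close>
  define B where "B g = \<tau> * R + (Y g / sqrt E + sqrt E) / 2" for g :: "real^'d"
  have Y: "integrable std_gaussian Y" "integral\<^sup>L std_gaussian Y \<le> E"
    unfolding Y_def E_def
    using integrable_std_gaussian_threshold_tail integral_std_gaussian_threshold_tail_le assms(3-5)
    by blast+
  have "gaussian_width ((\<lambda>x. D *v x) ` S_gamma s \<gamma>) \<le> integral\<^sup>L std_gaussian B"
  proof (rule gaussian_width_le_integral)
    show "(\<lambda>x. D *v x) ` S_gamma s \<gamma> \<noteq> {}"
      using S_gamma_nonempty[OF \<open>1 \<le> s\<close>] by auto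
    show "g \<bullet> y \<le> B g" if image: "y \<in> (\<lambda>x. D *v x) ` S_gamma s \<gamma>" for g y
    proof -
      obtain x where x: "x \<in> S_gamma s \<gamma>" and y: "y = D *v x"
        using image by auto
      have "norm x = 1"
        using x by (simp add: S_gamma_def)
      have "g \<bullet> y \<le> \<tau> * (\<Sum>i\<in>UNIV. \<bar>x $ i\<bar>) + sqrt (Y g)"
        unfolding y inner_matrix_vector_mult Y_def
        using sum_mult_le_threshold[OF \<open>0 \<le> \<tau>\<close>, of x] \<open>norm x = 1\<close> by simp
      also have "\<dots> \<le> \<tau> * R + sqrt (Y g / sqrt E * sqrt E)"
        unfolding R_def using S_gamma_sum_abs_le[OF x \<open>0 < \<gamma>\<close>] \<open>0 \<le> \<tau>\<close> \<open>0 < sqrt E\<close>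
        by (simp add: mult_left_mono)
      also have "\<dots> \<le> B g"
        unfolding B_def using arith_geo_mean_sqrt[of "Y g / sqrt E" "sqrt E"] Y_nonneg \<open>0 < sqrt E\<close>
        by simp
      finally show ?thesis .
    qed
    show "integrable std_gaussian B"
      unfolding B_def using Y(1) by simp
    show "0 \<le> B g" for g
      unfolding B_def R_def using assms(1,3) Y_nonneg[of g] \<open>0 < sqrt E\<close> by simp
  qed
  also have "integral\<^sup>L std_gaussian B = \<tau> * R + (integral\<^sup>L std_gaussian Y / sqrt E + sqrt E) / 2"
    unfolding B_def using Y(1) prob_space by (simp add: add_divide_distrib)
  also have "\<dots> \<le> \<tau> * R + sqrt E"
  proof -
    have "integral\<^sup>L std_gaussian Y / sqrt E \<le> E / sqrt E"
      using Y(2) \<open>0 < sqrt E\<close> by (simp add: divide_right_mono)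
    also have "E / sqrt E = sqrt E"
      using \<open>0 < E\<close> by (simp add: real_div_sqrt)
    finally show ?thesis by simp
  qed
  finally show ?thesis
    unfolding R_def E_def .
qed

lemma threshold_tail_bound_large_log:
  fixes n s \<rho> L :: real
  assumes "0 < \<rho>" and "1/2 \<le> L" and "exp L = sqrt 2 * n / s" and "0 < s" and "s \<le> n"
  defines "l \<equiv> 2 * sqrt (L / \<rho>)" and "\<tau> \<equiv> 2 * sqrt (\<rho> * L)"
  shows "n * (4 / l\<^sup>2) * exp (- l * \<tau> + l\<^sup>2 * \<rho> / 2) \<le> 4 * (s * \<rho> * L)"
proof -
  have "0 < L" "0 < n"
    using assms(2,4,5) by linarith+
  have l2: "l\<^sup>2 = 4 * L / \<rho>"
    unfolding l_def using \<open>0 < \<rho>\<close> \<open>0 < L\<close> by (simp add: power_mult_distrib)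
  have "sqrt (L / \<rho>) * sqrt (\<rho> * L) = sqrt (L / \<rho> * (\<rho> * L))"
    by (rule real_sqrt_mult[symmetric])
  also have "L / \<rho> * (\<rho> * L) = L\<^sup>2"
    using \<open>0 < \<rho>\<close> by (simp add: field_simps power2_eq_square)
  finally have "l * \<tau> = 4 * L"
    unfolding l_def \<tau>_def using \<open>0 < L\<close> by (simp add: mult_ac)
  then have exponent: "- l * \<tau> + l\<^sup>2 * \<rho> / 2 = - 2 * L"
    using l2 \<open>0 < \<rho>\<close> \<open>0 < L\<close> by simp
  have exp_exponent: "exp (- 2 * L) = s\<^sup>2 / (2 * n\<^sup>2)"
  proof -
    have "exp (- 2 * L) = inverse ((exp L)\<^sup>2)"
      by (simp add: exp_minus power2_eq_square mult_exp_exp)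
    then show ?thesis
      unfolding assms(3) using \<open>0 < s\<close> \<open>0 < n\<close> by (simp add: power_divide power_mult_distrib)
  qed
  have "n * (4 / l\<^sup>2) * exp (- l * \<tau> + l\<^sup>2 * \<rho> / 2) = n * (4 / (4 * L / \<rho>)) * (s\<^sup>2 / (2 * n\<^sup>2))"
    unfolding exponent exp_exponent by (simp only: l2)
  also have "\<dots> = (\<rho> * s / (2 * L)) * (s / n)"
    using \<open>0 < \<rho>\<close> \<open>0 < L\<close> \<open>0 < n\<close> by (simp add: field_simps power2_eq_square)
  also have "\<dots> \<le> \<rho> * s / (2 * L)"
    using assms(1,4,5) \<open>0 < L\<close> by (intro mult_left_le) auto
  also have "\<dots> \<le> 4 * (s * \<rho> * L)"
  proof -
    have "1 \<le> 8 * L * L"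
      using assms(2) mult_mono[OF assms(2) assms(2)] by simp
    then show ?thesis
      using assms(1,4) \<open>0 < L\<close> by (simp add: field_simps)
  qed
  finally show ?thesis .
qed

lemma threshold_tail_bound_small_log:
  fixes n s \<rho> L :: real
  assumes "0 < \<rho>" and "L < 1/2" and "exp L = sqrt 2 * n / s" and "0 < s" and "s \<le> n"
  defines "l \<equiv> sqrt (2 / \<rho>)"
  shows "n * (4 / l\<^sup>2) * exp (l\<^sup>2 * \<rho> / 2) \<le> 36 * (s * \<rho> * L)"
proof -
  have "0 < n"
    using assms(4,5) by linarith
  have "sqrt 2 \<le> exp L"
    unfolding assms(3) using assms(4,5) by (simp add: field_simps)
  then have "ln (sqrt 2) \<le> L"
    using ln_le_cancel_iff[of "sqrt 2" "exp L"] by simp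
  then have "1/3 \<le> L"
    using ln2_ge_two_thirds by (simp add: ln_sqrt)
  have "exp L < exp (1/2)"
    using assms(2) by simp
  also have "exp (1/2::real) < 2"
  proof -
    have "(exp (1/2::real))\<^sup>2 = exp 1"
      by (simp add: power2_eq_square mult_exp_exp)
    also have "\<dots> < 2\<^sup>2"
      using exp_le by simp
    finally show ?thesis
      by (rule power2_less_imp_less) simp
  qed
  finally have "sqrt 2 * n < 2 * s"
    using assms(3,4) by (simp add: field_simps)
  moreover have "1.4 * n \<le> sqrt 2 * n"
    using \<open>0 < n\<close> by (intro mult_right_mono real_le_rsqrt) (auto simp: power2_eq_square)
  ultimately have "n \<le> 1.5 * s"
    using assms(4) by linarith
  have "n * (4 / l\<^sup>2) * exp (l\<^sup>2 * \<rho> / 2) = 2 * exp 1 * \<rho> * n"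
    unfolding l_def using assms(1) by simp
  also have "\<dots> \<le> 6 * \<rho> * (1.5 * s)"
    using exp_le \<open>n \<le> 1.5 * s\<close> assms(1) \<open>0 < n\<close> by (intro mult_mono) auto
  also have "\<dots> \<le> 36 * (s * \<rho> * L)"
    using \<open>1/3 \<le> L\<close> assms(1,4) by (simp add: algebra_simps)
  finally show ?thesis .
qed

lemma threshold_parameters_exist:
  fixes n s \<rho> \<gamma> :: real
  assumes "0 < \<gamma>" and "\<gamma> < 1" and "0 < \<rho>" and "0 < s" and "s \<le> n"
  shows "\<exists>\<tau> l. 0 \<le> \<tau> \<and> 0 < l \<and>
           \<tau> * ((1 + 1/\<gamma>) * sqrt s) + sqrt (n * (4 / l\<^sup>2) * exp (- l * \<tau> + l\<^sup>2 * \<rho> / 2))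
             \<le> 6 / \<gamma> * sqrt (s * \<rho> * ln (sqrt 2 * n / s))"
proof -
  define L where "L = ln (sqrt 2 * n / s)"
  define Q where "Q = sqrt (s * \<rho> * L)"
  have "1 * 1 \<le> sqrt 2 * (n / s)"
    using assms(4,5) by (intro mult_mono) auto
  then have "1 \<le> sqrt 2 * n / s"
    by simp
  then have "exp L = sqrt 2 * n / s" and "0 \<le> L"
    unfolding L_def by auto
  then have "0 \<le> Q"
    unfolding Q_def using assms(3,4) by simp
  show ?thesis
  proof (cases "1/2 \<le> L")
    case True
    define \<tau> l where "\<tau> = 2 * sqrt (\<rho> * L)" and "l = 2 * sqrt (L / \<rho>)"
    have "sqrt (n * (4 / l\<^sup>2) * exp (- l * \<tau> + l\<^sup>2 * \<rho> / 2)) \<le> sqrt (4 * (s * \<rho> * L))"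
      unfolding \<tau>_def l_def
      using threshold_tail_bound_large_log[OF assms(3) True \<open>exp L = _\<close> assms(4,5)] by simp
    also have "\<dots> = 2 * Q"
      unfolding Q_def by (simp add: real_sqrt_mult)
    finally have tail: "sqrt (n * (4 / l\<^sup>2) * exp (- l * \<tau> + l\<^sup>2 * \<rho> / 2)) \<le> 2 * Q" .
    have head: "\<tau> * ((1 + 1/\<gamma>) * sqrt s) = (2 * (1 + 1/\<gamma>)) * Q"
      unfolding \<tau>_def Q_def by (simp add: real_sqrt_mult mult_ac)
    have "2 * (1 + 1/\<gamma>) + 2 \<le> 6 / \<gamma>"
      using assms(1,2) by (simp add: field_simps)
    then have "(2 * (1 + 1/\<gamma>)) * Q + 2 * Q \<le> 6 / \<gamma> * Q"
      using \<open>0 \<le> Q\<close> by (metis distrib_right mult_right_mono)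
    then have "\<tau> * ((1 + 1/\<gamma>) * sqrt s) + sqrt (n * (4 / l\<^sup>2) * exp (- l * \<tau> + l\<^sup>2 * \<rho> / 2))
        \<le> 6 / \<gamma> * Q"
      using head tail by linarith
    moreover have "0 \<le> \<tau>" "0 < l"
      unfolding \<tau>_def l_def using assms(3) True by auto
    ultimately show ?thesis
      unfolding Q_def L_def by blast
  next
    case False
    define l where "l = sqrt (2 / \<rho>)"
    have "sqrt (n * (4 / l\<^sup>2) * exp (- l * 0 + l\<^sup>2 * \<rho> / 2)) \<le> sqrt (36 * (s * \<rho> * L))"
      unfolding l_def
      using threshold_tail_bound_small_log[OF assms(3) _ \<open>exp L = _\<close> assms(4,5)] False by simp
    also have "\<dots> \<le> 6 / \<gamma> * Q"
    proof -
      have "6 \<le> 6 / \<gamma>"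
        using assms(1,2) by (simp add: field_simps)
      then have "6 * Q \<le> 6 / \<gamma> * Q"
        using \<open>0 \<le> Q\<close> by (rule mult_right_mono)
      then show ?thesis
        unfolding Q_def by (simp add: real_sqrt_mult)
    qed
    finally have "0 * ((1 + 1/\<gamma>) * sqrt s) + sqrt (n * (4 / l\<^sup>2) * exp (- l * 0 + l\<^sup>2 * \<rho> / 2))
        \<le> 6 / \<gamma> * Q"
      by simp
    moreover have "0 < l"
      unfolding l_def using assms(3) by simp
    ultimately show ?thesis
      unfolding Q_def L_def by blast
  qed
qed

theorem theorem4p8:
  fixes D :: "real^'n^'d" and s :: nat and \<gamma> \<rho> :: real
  assumes "1 \<le> s" and "s \<le> CARD('n)"
    and "0 < \<gamma>" and "\<gamma> < 1"
    and "\<forall>i. (norm (column i D))\<^sup>2 \<le> \<rho>"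
  shows "gaussian_width ((\<lambda>x. D *v x) ` S_gamma s \<gamma>)
           \<le> 6 / \<gamma> * sqrt (real s * \<rho> * ln (sqrt 2 * real CARD('n) / real s))"
proof (cases "\<rho> = 0")
  case True
  then have "column i D = 0" for i
    using assms(5) by simp
  then have "gaussian_width ((\<lambda>x. D *v x) ` S_gamma s \<gamma>) \<le> integral\<^sup>L std_gaussian (\<lambda>_::real^'d. 0::real)"
    using S_gamma_nonempty[OF assms(1)]
    by (intro gaussian_width_le_integral) (auto simp: inner_matrix_vector_mult)
  then show ?thesis
    using True by simp
next
  case False
  then have "0 < \<rho>"
    using assms(5) by (metis order.trans order.not_eq_order_implies_strict zero_le_power2)
  then obtain \<tau> l where "0 \<le> \<tau>" and "0 < l" and bound:
    "\<tau> * ((1 + 1/\<gamma>) * sqrt (real s))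
       + sqrt (real CARD('n) * (4 / l\<^sup>2) * exp (- l * \<tau> + l\<^sup>2 * \<rho> / 2))
     \<le> 6 / \<gamma> * sqrt (real s * \<rho> * ln (sqrt 2 * real CARD('n) / real s))"
    using threshold_parameters_exist[OF assms(3,4) \<open>0 < \<rho>\<close>, of "real s" "real CARD('n)"] assms(1,2)
    by auto
  show ?thesis
    using gaussian_width_cone_image_le[OF assms(3,1) \<open>0 \<le> \<tau>\<close> \<open>0 < l\<close> assms(5)] bound
    by linarith
qed

end
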